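(* Let $f(w)=\sum_{n=0}^dc_nw^n$ be a polynomial with complex coefficients and, for $(i,j)\in J$, let $f(\ell_{i,j}^* ):=c_01_{i,j}+\sum_{n\ge1}c_n(\ell_{i,j}^* )^n$. Let $L=\sum_{(i,j)\in J}\ell_{i,j}$ and $\omega_k(z)=(1-zL)^{-1}e_{k,k}$ for $|z|$ small enough. Then for every $j$ with $(j,j)\in J$, $$f(\ell_{j,j}^* )\omega_j(z)=f(\alpha_{j,j}^2z)1_{j,j}\omega_j(z)+\alpha_{j,j}\,Df(\alpha_{j,j}^2z)\,\Omega,$$ where $Df(z)=\frac{f(z)-f(0)}{z}$; and for every off-diagonal $(i,j)\in J$ ($i\neq j$) and every $k$, $$f(\ell_{i,j}^* )\omega_k(z)=f(\alpha_{i,j}^2z)1_{i,j}\omega_k(z).$$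
   Context: Fock space. Let $J\subseteq\{1,2\}\times\{1,2\}$, $(\alpha_{i,j})_{(i,j)\in J}$ positive reals, $\{e_{i,j}:(i,j)\in J\}$ orthonormal vectors and $\mathcal{F}$ the full Fock space over $\bigoplus_{(i,j)\in J}\mathbb{C}e_{i,j}$ with vacuum $\Omega$. The strongly matricially free Fock space $\mathcal{N}\subseteq\mathcal{F}$ is the closed span of $\Omega$ and all simple tensors $e_{i_1,i_2}^{\otimes n_1}\otimes e_{i_2,i_3}^{\otimes n_2}\otimes\dots\otimes e_{i_{m-1},i_m}^{\otimes n_{m-1}}\otimes e_{i_m,i_m}^{\otimes n_m}$ ($m\ge1$, $n_k\ge1$, $i_1\neq\dots\neq i_m$, all pairs in $J$). With $P$ the projection onto $\mathcal{N}$ and $\ell(e)w=e\otimes w$, set $\ell_{i,j}=\alpha_{i,j}P\ell(e_{i,j})|_{\mathcal{N}}$ with adjoints $\ell_{i,j}^*$. Let $\mathcal{N}_{i,j}$ be the closed span of those simple tensors whose first factor is $e_{i,j}$; $1_{j,j}$ is the projection onto $\mathbb{C}\Omega\oplus\mathcal{N}_{j,j}$ and, for $i\ne j$, $1_{i,j}$ is the projection onto $\mathcal{N}\ominus(\mathbb{C}\Omega\oplus\mathcal{N}_{i,i})$. The vectors $e_{k,k}$ used in $\omega_k$ are those with $(k,k)\in J$. *)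

theory Defs
  imports "HOL-Analysis.Analysis" "HOL-Computational_Algebra.Polynomial"
begin

text \<open>Concrete model of the full Fock space over span{e_p : p in J}:
  vectors are coordinate functions on words (lists of letters p in J);
  the empty word is the vacuum Omega, the word [p1,...,pn] is e_p1 (x) ... (x) e_pn.\<close>

type_synonym fvec = "(nat \<times> nat) list \<Rightarrow> complex"

text \<open>Words spanning the strongly matricially free Fock space N (literal form
  e_{i1,i2}^n1 (x) e_{i2,i3}^n2 (x) ... (x) e_{im,im}^nm, consecutive indices distinct).\<close>
definition adm :: "(nat \<times> nat) set \<Rightarrow> (nat \<times> nat) list \<Rightarrow> bool" where
  "adm J w \<longleftrightarrow> w = [] \<or>
     (\<exists>is ns. is \<noteq> [] \<and> length ns = length is \<and> (\<forall>n\<in>set ns. n \<ge> 1) \<and>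
        (\<forall>k. k + 1 < length is \<longrightarrow> is ! k \<noteq> is ! (k + 1)) \<and>
        w = concat (map (\<lambda>k. replicate (ns ! k)
               (is ! k, if k + 1 < length is then is ! (k + 1) else is ! k)) [0..<length is]) \<and>
        set w \<subseteq> J)"

definition in_N :: "(nat \<times> nat) set \<Rightarrow> fvec \<Rightarrow> bool" where
  "in_N J v \<longleftrightarrow> (\<lambda>w. (cmod (v w))\<^sup>2) summable_on UNIV \<and> (\<forall>w. \<not> adm J w \<longrightarrow> v w = 0)"

definition basis_vec :: "(nat \<times> nat) list \<Rightarrow> fvec" where
  "basis_vec u = (\<lambda>w. if w = u then 1 else 0)"

text \<open>ell_p = alpha_p P ell(e_p) restricted to N, in coordinates.\<close>
definition lop :: "(nat \<times> nat) set \<Rightarrow> (nat \<times> nat \<Rightarrow> real) \<Rightarrow> nat \<times> nat \<Rightarrow> fvec \<Rightarrow> fvec" where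
  "lop J \<alpha> p v = (\<lambda>w. case w of [] \<Rightarrow> 0
      | a # w' \<Rightarrow> if a = p \<and> adm J w then complex_of_real (\<alpha> p) * v w' else 0)"

definition lstar :: "(nat \<times> nat \<Rightarrow> real) \<Rightarrow> nat \<times> nat \<Rightarrow> fvec \<Rightarrow> fvec" where
  "lstar \<alpha> p v = (\<lambda>w. complex_of_real (\<alpha> p) * v (p # w))"

definition Lop :: "(nat \<times> nat) set \<Rightarrow> (nat \<times> nat \<Rightarrow> real) \<Rightarrow> fvec \<Rightarrow> fvec" where
  "Lop J \<alpha> v = (\<lambda>w. \<Sum>p\<in>J. lop J \<alpha> p v w)"

definition proj :: "(nat \<times> nat) set \<Rightarrow> nat \<times> nat \<Rightarrow> fvec \<Rightarrow> fvec" where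
  "proj J p v = (\<lambda>w. if fst p = snd p
       then (if adm J w \<and> (w = [] \<or> hd w = p) then v w else 0)
       else (if adm J w \<and> w \<noteq> [] \<and> hd w \<noteq> (fst p, fst p) then v w else 0))"

definition resolv :: "(nat \<times> nat) set \<Rightarrow> (nat \<times> nat \<Rightarrow> real) \<Rightarrow> complex \<Rightarrow> fvec \<Rightarrow> fvec" where
  "resolv J \<alpha> z u = (THE v. in_N J v \<and> (\<lambda>w. v w - z * Lop J \<alpha> v w) = u)"

definition omega :: "(nat \<times> nat) set \<Rightarrow> (nat \<times> nat \<Rightarrow> real) \<Rightarrow> nat \<Rightarrow> complex \<Rightarrow> fvec" where
  "omega J \<alpha> k z = resolv J \<alpha> z (basis_vec [(k, k)])"

definition fl :: "(nat \<times> nat) set \<Rightarrow> (nat \<times> nat \<Rightarrow> real) \<Rightarrow> complex poly \<Rightarrow> nat \<times> nat \<Rightarrow> fvec \<Rightarrow> fvec" where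
  "fl J \<alpha> f p v = (\<lambda>w. coeff f 0 * proj J p v w +
      (\<Sum>n = 1..degree f. coeff f n * ((lstar \<alpha> p) ^^ n) v w))"

text \<open>Df(z) = (f(z) - f(0))/z, extended by continuity at 0 (the polynomial sum c_n z^(n-1)).\<close>
definition Df :: "complex poly \<Rightarrow> complex \<Rightarrow> complex" where
  "Df f z = (\<Sum>n = 1..degree f. coeff f n * z ^ (n - 1))"

end

theory Submission
  imports Defs
begin

text \<open>Since \<open>\<ell>\<^sub>p\<close> prepends the letter \<open>p\<close>, the equation \<open>v - z L v = e\<^sub>k\<^sub>,\<^sub>k\<close> is solved coordinatewise
  by recursion on word length: \<open>\<omega>\<^sub>k(z)\<close> has coefficient \<open>z\<^sup>n\<^sup>-\<^sup>1 \<alpha>\<^sub>p\<^sub>1 \<cdots> \<alpha>\<^sub>p\<^sub>n\<^sub>-\<^sub>1\<close> on every admissible word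
  \<open>p\<^sub>1 \<cdots> p\<^sub>n\<close> ending in \<open>(k, k)\<close>, and it lies in \<open>N\<close> for small \<open>|z|\<close> by comparison with a geometric
  series. The adjoint \<open>\<ell>\<^sub>p\<^sup>*\<close> strips a leading \<open>p\<close>, so \<open>(\<ell>\<^sub>p\<^sup>*)\<^sup>n \<omega>\<^sub>k(z)\<close> reads off the coefficients at
  the words \<open>p\<^sup>n w\<close>. For nonempty \<open>w\<close>, \<open>p\<^sup>n w\<close> is admissible exactly when \<open>w\<close> lies in the range of
  \<open>1\<^sub>p\<close>, which gives \<open>(\<alpha>\<^sub>p\<^sup>2 z)\<^sup>n 1\<^sub>p \<omega>\<^sub>k(z)\<close>; the only other contribution is the vacuum coefficient
  \<open>\<alpha>\<^sub>j\<^sub>,\<^sub>j (\<alpha>\<^sub>j\<^sub>,\<^sub>j\<^sup>2 z)\<^sup>n\<^sup>-\<^sup>1\<close> coming from the word \<open>(j, j)\<^sup>n\<close>. Summing against the coefficients of \<open>f\<close>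
  gives both formulas.\<close>

fun smf_word :: "(nat \<times> nat) set \<Rightarrow> (nat \<times> nat) list \<Rightarrow> bool" where
  "smf_word J [] = True"
| "smf_word J [a] = (a \<in> J \<and> fst a = snd a)"
| "smf_word J (a # b # w) =
     (a \<in> J \<and> smf_word J (b # w) \<and> (b = a \<or> fst a \<noteq> snd a \<and> fst b = snd a))"

lemma smf_word_subset: "smf_word J w \<Longrightarrow> set w \<subseteq> J"
  by (induction J w rule: smf_word.induct) auto

lemma smf_word_replicate_append:
  assumes "n \<ge> 1"
  shows "smf_word J (replicate n a @ w) \<longleftrightarrow> a \<in> J \<and>
     (if w = [] then fst a = snd a
      else smf_word J w \<and> (hd w = a \<or> fst a \<noteq> snd a \<and> fst (hd w) = snd a))"
  using assms
proof (induction n rule: dec_induct)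
  case base
  then show ?case by (cases w) auto
next
  case (step m)
  then obtain m' where "m = Suc m'" by (cases m) auto
  with step show ?case by auto
qed

fun block_word :: "nat list \<Rightarrow> nat list \<Rightarrow> (nat \<times> nat) list" where
  "block_word (i # i' # ks) (n # ns) = replicate n (i, i') @ block_word (i' # ks) ns"
| "block_word [i] (n # ns) = replicate n (i, i)"
| "block_word _ _ = []"

lemma concat_blocks_eq_block_word:
  "length ns = length ks \<Longrightarrow>
   concat (map (\<lambda>k. replicate (ns ! k)
      (ks ! k, if k + 1 < length ks then ks ! (k + 1) else ks ! k)) [0..<length ks])
   = block_word ks ns"
proof (induction ks arbitrary: ns)
  case Nil
  then show ?case by simp
next
  case (Cons i ks')
  then obtain n ns' where ns: "ns = n # ns'" "length ns' = length ks'" by (cases ns) auto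
  have up: "[0..<length (i # ks')] = 0 # map Suc [0..<length ks']"
    by (simp add: map_Suc_upt upt_conv_Cons del: upt_Suc)
  show ?case
  proof (cases ks')
    case Nil
    with ns show ?thesis by simp
  next
    case (Cons i' ks'')
    have "concat (map (\<lambda>k. replicate (ns ! k) ((i # ks') ! k,
              if k + 1 < length (i # ks') then (i # ks') ! (k + 1) else (i # ks') ! k))
            (map Suc [0..<length ks']))
        = concat (map (\<lambda>k. replicate (ns' ! k)
              (ks' ! k, if k + 1 < length ks' then ks' ! (k + 1) else ks' ! k)) [0..<length ks'])"
      using ns by (auto simp: comp_def simp del: add_Suc simp flip: Suc_eq_plus1
          intro!: arg_cong[where f = concat] map_cong)
    also have "\<dots> = block_word ks' ns'"
      using Cons.IH ns by simp
    finally show ?thesis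
      using ns up Cons by simp
  qed
qed

definition valid_blocks :: "nat list \<Rightarrow> nat list \<Rightarrow> bool" where
  "valid_blocks ks ns \<longleftrightarrow> ks \<noteq> [] \<and> length ns = length ks \<and> (\<forall>n\<in>set ns. n \<ge> 1) \<and>
     (\<forall>k. k + 1 < length ks \<longrightarrow> ks ! k \<noteq> ks ! (k + 1))"

lemma valid_blocks_Cons_Cons:
  "valid_blocks (i # i' # ks) (n # ns) \<longleftrightarrow> valid_blocks (i' # ks) ns \<and> i \<noteq> i' \<and> n \<ge> 1"
proof -
  have "(\<forall>k. k + 1 < length (i # i' # ks) \<longrightarrow> (i # i' # ks) ! k \<noteq> (i # i' # ks) ! (k + 1))
     \<longleftrightarrow> i \<noteq> i' \<and> (\<forall>k. k + 1 < length (i' # ks) \<longrightarrow> (i' # ks) ! k \<noteq> (i' # ks) ! (k + 1))"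
    (is "(\<forall>k. ?P k) \<longleftrightarrow> _")
  proof
    assume "\<forall>k. ?P k"
    then show "i \<noteq> i' \<and> (\<forall>k. k + 1 < length (i' # ks) \<longrightarrow> (i' # ks) ! k \<noteq> (i' # ks) ! (k + 1))"
      by (metis Suc_eq_plus1 length_Cons nat_add_left_cancel_less nth_Cons_Suc plus_1_eq_Suc
          zero_less_Suc nth_Cons_0)
  next
    assume r: "i \<noteq> i' \<and> (\<forall>k. k + 1 < length (i' # ks) \<longrightarrow> (i' # ks) ! k \<noteq> (i' # ks) ! (k + 1))"
    show "\<forall>k. ?P k"
    proof (intro allI impI)
      fix k
      assume "k + 1 < length (i # i' # ks)"
      with r show "(i # i' # ks) ! k \<noteq> (i # i' # ks) ! (k + 1)"
        by (cases k) auto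
    qed
  qed
  then show ?thesis
    unfolding valid_blocks_def by auto
qed

lemma hd_block_word:
  "valid_blocks ks ns \<Longrightarrow>
   block_word ks ns \<noteq> [] \<and>
   hd (block_word ks ns) = (hd ks, case tl ks of [] \<Rightarrow> hd ks | i' # _ \<Rightarrow> i')"
proof (induction ks ns rule: block_word.induct)
  case (1 i i' ks n ns)
  then show ?case by (cases n) (auto simp: valid_blocks_def)
next
  case (2 i n ns)
  then show ?case by (cases n) (auto simp: valid_blocks_def)
qed (auto simp: valid_blocks_def)

lemma smf_word_block_word:
  "valid_blocks ks ns \<Longrightarrow> set (block_word ks ns) \<subseteq> J \<Longrightarrow> smf_word J (block_word ks ns)"
proof (induction ks ns rule: block_word.induct)
  case (1 i i' ks n ns)
  then have v: "valid_blocks (i' # ks) ns" "i \<noteq> i'" "n \<ge> 1"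
    using valid_blocks_Cons_Cons by auto
  then have "block_word (i' # ks) ns \<noteq> []" "fst (hd (block_word (i' # ks) ns)) = i'"
    using hd_block_word[OF v(1)] by auto
  moreover have "smf_word J (block_word (i' # ks) ns)"
    using 1 v by auto
  moreover have "(i, i') \<in> J"
    using "1.prems"(2) v(3) by (cases n) auto
  ultimately show ?case
    using smf_word_replicate_append[OF v(3), of J "(i, i')"] v by auto
next
  case (2 i n ns)
  then have "n \<ge> 1" "(i, i) \<in> J"
    by (cases n; auto simp: valid_blocks_def)+
  then show ?case
    using smf_word_replicate_append[of n J "(i, i)" "[]"] by simp
qed (auto simp: valid_blocks_def)

lemma block_word_Suc:
  "block_word (i # ks) (Suc n # ns) =
   (i, case ks of [] \<Rightarrow> i | i' # _ \<Rightarrow> i') # block_word (i # ks) (n # ns)"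
  by (cases ks) auto

lemma smf_word_imp_block_word:
  "smf_word J w \<Longrightarrow> w \<noteq> [] \<Longrightarrow> \<exists>ks ns. valid_blocks ks ns \<and> w = block_word ks ns"
proof (induction J w rule: smf_word.induct)
  case (2 J a)
  then have "[a] = block_word [fst a] [1]"
    by (cases a) auto
  moreover have "valid_blocks [fst a] [1]"
    by (simp add: valid_blocks_def)
  ultimately show ?case by blast
next
  case (3 J a b x)
  then obtain ks ns where v: "valid_blocks ks ns" and bx: "b # x = block_word ks ns"
    by auto
  then obtain i ks' n ns' where ks: "ks = i # ks'" "ns = n # ns'"
    unfolding valid_blocks_def by (cases ks; cases ns) auto
  have hb: "b = (i, case ks' of [] \<Rightarrow> i | i' # _ \<Rightarrow> i')"
    using hd_block_word[OF v] bx ks by (metis list.sel(1) list.sel(3))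
  show ?case
  proof (cases "b = a")
    case True
    have "a # b # x = block_word ks (Suc n # ns')"
      using block_word_Suc[of i ks' n ns'] bx ks hb True by simp
    moreover have "valid_blocks ks (Suc n # ns')"
      using v ks unfolding valid_blocks_def by auto
    ultimately show ?thesis by blast
  next
    case False
    then have a: "fst a \<noteq> snd a" "a = (fst a, i)"
      using 3 hb by (cases a; auto)+
    then have "a # b # x = block_word (fst a # ks) (1 # ns)"
      using bx ks by simp
    moreover have "valid_blocks (fst a # ks) (1 # ns)"
      using v ks a valid_blocks_Cons_Cons[of "fst a" i ks' 1 ns] by (metis le_refl prod.sel(2))
    ultimately show ?thesis by blast
  qed
qed auto

lemma adm_iff_smf_word: "adm J w \<longleftrightarrow> smf_word J w"
proof
  assume "adm J w"
  then show "smf_word J w"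
    unfolding adm_def
  proof (elim disjE exE conjE)
    fix ks ns
    assume blocks: "ks \<noteq> []" "length ns = length ks" "\<forall>n\<in>set ns. 1 \<le> n"
      "\<forall>k. k + 1 < length ks \<longrightarrow> ks ! k \<noteq> ks ! (k + 1)"
      and w: "w = concat (map (\<lambda>k. replicate (ns ! k)
               (ks ! k, if k + 1 < length ks then ks ! (k + 1) else ks ! k)) [0..<length ks])"
      and "set w \<subseteq> J"
    moreover have "w = block_word ks ns"
      using w concat_blocks_eq_block_word[OF blocks(2)] by simp
    ultimately show ?thesis
      using smf_word_block_word[of ks ns J] unfolding valid_blocks_def by simp
  qed simp
next
  assume w: "smf_word J w"
  show "adm J w"
  proof (cases "w = []")
    case False
    then obtain ks ns where v: "valid_blocks ks ns" and wb: "w = block_word ks ns"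
      using smf_word_imp_block_word w by blast
    then have blocks: "ks \<noteq> []" "length ns = length ks" "\<forall>n\<in>set ns. 1 \<le> n"
      "\<forall>k. k + 1 < length ks \<longrightarrow> ks ! k \<noteq> ks ! (k + 1)"
      by (simp_all add: valid_blocks_def)
    have "w = concat (map (\<lambda>k. replicate (ns ! k)
               (ks ! k, if k + 1 < length ks then ks ! (k + 1) else ks ! k)) [0..<length ks])"
      using concat_blocks_eq_block_word[OF blocks(2)] wb by simp
    with blocks smf_word_subset[OF w] show ?thesis
      unfolding adm_def by (intro disjI2 exI[where x = ks] exI[where x = ns] conjI)
  qed (simp add: adm_def)
qed

lemma Lop_Nil: "Lop J \<alpha> v [] = 0"
  by (simp add: Lop_def lop_def)

lemma Lop_Cons:
  assumes "finite J"
  shows "Lop J \<alpha> v (a # w) = (if smf_word J (a # w) then complex_of_real (\<alpha> a) * v w else 0)"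
proof -
  have "Lop J \<alpha> v (a # w) =
      (\<Sum>p\<in>J. if p = a then (if smf_word J (a # w) then complex_of_real (\<alpha> a) * v w else 0) else 0)"
    unfolding Lop_def by (rule sum.cong) (auto simp: lop_def adm_iff_smf_word)
  also have "\<dots> = (if a \<in> J then (if smf_word J (a # w) then complex_of_real (\<alpha> a) * v w else 0) else 0)"
    by (rule sum.delta[OF assms])
  also have "\<dots> = (if smf_word J (a # w) then complex_of_real (\<alpha> a) * v w else 0)"
    using smf_word_subset[of J "a # w"] by auto
  finally show ?thesis .
qed

text \<open>The coordinates of \<open>\<Sum>\<^sub>n z\<^sup>n L\<^sup>n e\<^sub>k\<^sub>,\<^sub>k\<close>: the vector \<open>L\<^sup>n e\<^sub>k\<^sub>,\<^sub>k\<close> lives on the admissible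
  words of length \<open>n + 1\<close> ending in \<open>(k, k)\<close>, each weighted by the product of the \<open>\<alpha>\<close>'s
  of its letters but the last.\<close>
definition resolvent_vec :: "(nat \<times> nat) set \<Rightarrow> (nat \<times> nat \<Rightarrow> real) \<Rightarrow> nat \<Rightarrow> complex \<Rightarrow> fvec" where
  "resolvent_vec J \<alpha> k z w =
     (if smf_word J w \<and> w \<noteq> [] \<and> last w = (k, k)
      then z ^ (length w - 1) * (\<Prod>p\<leftarrow>butlast w. complex_of_real (\<alpha> p)) else 0)"

lemma resolvent_vec_solves:
  assumes "finite J" "(k, k) \<in> J"
  shows "(\<lambda>w. resolvent_vec J \<alpha> k z w - z * Lop J \<alpha> (resolvent_vec J \<alpha> k z) w) = basis_vec [(k, k)]"
proof
  fix w
  show "resolvent_vec J \<alpha> k z w - z * Lop J \<alpha> (resolvent_vec J \<alpha> k z) w = basis_vec [(k, k)] w"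
  proof (cases w rule: remdups_adj.cases)
    case 1
    then show ?thesis by (simp add: resolvent_vec_def Lop_Nil basis_vec_def)
  next
    case (2 a)
    with assms show ?thesis by (auto simp: resolvent_vec_def Lop_Cons basis_vec_def)
  next
    case (3 a b x)
    show ?thesis
    proof (cases "smf_word J (a # b # x)")
      case True
      then have "smf_word J (b # x)" by simp
      with True 3 assms(1) show ?thesis
        by (simp add: resolvent_vec_def Lop_Cons basis_vec_def del: smf_word.simps(3))
    next
      case False
      with 3 assms(1) show ?thesis
        by (simp add: resolvent_vec_def Lop_Cons basis_vec_def del: smf_word.simps(3))
    qed
  qed
qed

text \<open>Since \<open>L\<close> prepends a letter, \<open>v - z L v = u\<close> determines \<open>v\<close> by recursion on word length,
  for every \<open>z\<close>; smallness of \<open>z\<close> is only needed for \<open>v\<close> to lie in \<open>N\<close>.\<close>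
lemma resolvent_equation_unique:
  assumes "finite J"
    and "(\<lambda>w. v w - z * Lop J \<alpha> v w) = u" "(\<lambda>w. v' w - z * Lop J \<alpha> v' w) = u"
  shows "v = v'"
proof
  fix w
  show "v w = v' w"
  proof (induction w)
    case Nil
    then show ?case using assms(2,3) by (metis Lop_Nil mult_zero_right diff_zero)
  next
    case (Cons a w)
    then show ?case
      using fun_cong[OF assms(2), of "a # w"] fun_cong[OF assms(3), of "a # w"]
      by (auto simp: Lop_Cons[OF assms(1)] diff_eq_eq)
  qed
qed

lemma summable_on_word_power:
  fixes q :: real
  assumes "finite A" "0 \<le> q" "real (card A) * q < 1"
  shows "(\<lambda>w. if set w \<subseteq> A then q ^ length w else 0) summable_on UNIV"
proof (rule nonneg_bdd_above_summable_on)
  define c where "c = real (card A) * q"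
  have c: "0 \<le> c" "c < 1"
    using assms by (simp_all add: c_def)
  show "bdd_above (sum (\<lambda>w. if set w \<subseteq> A then q ^ length w else 0) ` {F. F \<subseteq> UNIV \<and> finite F})"
  proof (rule bdd_aboveI2)
    fix F :: "'a list set"
    assume "F \<in> {F. F \<subseteq> UNIV \<and> finite F}"
    then have F: "finite F" by simp
    define N where "N = Max (length ` F)"
    define S where "S = {w. set w \<subseteq> A \<and> length w \<le> N}"
    have S: "finite S"
      unfolding S_def by (rule finite_lists_length_le[OF assms(1)])
    have "(\<Sum>w\<in>F. if set w \<subseteq> A then q ^ length w else 0) \<le> (\<Sum>w\<in>S. q ^ length w)"
    proof -
      have "(\<Sum>w\<in>F. if set w \<subseteq> A then q ^ length w else 0)
          = (\<Sum>w\<in>F \<inter> S. if set w \<subseteq> A then q ^ length w else 0)"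
        using F by (intro sum.mono_neutral_right) (auto simp: S_def N_def)
      also have "\<dots> \<le> (\<Sum>w\<in>S. if set w \<subseteq> A then q ^ length w else 0)"
        using S assms(2) by (intro sum_mono2) auto
      finally show ?thesis
        by (simp add: S_def)
    qed
    also have "(\<Sum>w\<in>S. q ^ length w) = (\<Sum>n\<le>N. \<Sum>w\<in>{w. set w \<subseteq> A \<and> length w = n}. q ^ length w)"
    proof -
      have "S = (\<Union>n\<in>{..N}. {w. set w \<subseteq> A \<and> length w = n})"
        by (auto simp: S_def)
      then show ?thesis
        by (simp only:) (rule sum.UNION_disjoint, auto intro: finite_lists_length_eq[OF assms(1)])
    qed
    also have "\<dots> = (\<Sum>n\<le>N. c ^ n)"
    proof (rule sum.cong[OF refl])
      fix n
      have "(\<Sum>w\<in>{w. set w \<subseteq> A \<and> length w = n}. q ^ length w)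
          = (\<Sum>w\<in>{w. set w \<subseteq> A \<and> length w = n}. q ^ n)"
        by (rule sum.cong) auto
      then show "(\<Sum>w\<in>{w. set w \<subseteq> A \<and> length w = n}. q ^ length w) = c ^ n"
        by (simp add: card_lists_length_eq[OF assms(1)] c_def power_mult_distrib)
    qed
    also have "\<dots> \<le> (\<Sum>n. c ^ n)"
      using c by (intro sum_le_suminf summable_geometric) auto
    also have "\<dots> = 1 / (1 - c)"
      using c by (simp add: suminf_geometric)
    finally show "(\<Sum>w\<in>F. if set w \<subseteq> A then q ^ length w else 0) \<le> 1 / (1 - c)" .
  qed
qed (simp add: assms(2))

lemma norm_prod_list_of_real_le:
  assumes "\<forall>p\<in>set xs. 0 \<le> \<alpha> p \<and> \<alpha> p \<le> M"
  shows "cmod (\<Prod>p\<leftarrow>xs. complex_of_real (\<alpha> p)) \<le> M ^ length xs"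
  using assms
proof (induction xs)
  case (Cons a xs)
  then have "\<alpha> a * cmod (\<Prod>p\<leftarrow>xs. complex_of_real (\<alpha> p)) \<le> M * M ^ length xs"
    by (intro mult_mono) auto
  with Cons.prems show ?case
    by (simp add: norm_mult)
qed simp

lemma resolvent_vec_in_N:
  assumes "finite J" "\<forall>p\<in>J. 0 \<le> \<alpha> p \<and> \<alpha> p \<le> M" "cmod z * M * (1 + card J) \<le> 1"
  shows "in_N J (resolvent_vec J \<alpha> k z)"
  unfolding in_N_def
proof
  define r where "r = 1 / (1 + real (card J))"
  have r: "0 < r" "r \<le> 1" "real (card J) * r < 1"
    by (simp_all add: r_def field_simps)
  have zM: "cmod z * M \<le> r"
    using assms(3) by (simp add: r_def field_simps)
  show "(\<lambda>w. (cmod (resolvent_vec J \<alpha> k z w))\<^sup>2) summable_on UNIV"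
  proof (rule summable_on_comparison_test)
    show "(\<lambda>w. (1 / r) * (if set w \<subseteq> J then r ^ length w else 0)) summable_on UNIV"
      using summable_on_word_power[OF assms(1) _ r(3)] r(1) by (intro summable_on_cmult_right) auto
  next
    fix w :: "(nat \<times> nat) list"
    show "(cmod (resolvent_vec J \<alpha> k z w))\<^sup>2 \<le> (1 / r) * (if set w \<subseteq> J then r ^ length w else 0)"
    proof (cases "smf_word J w \<and> w \<noteq> [] \<and> last w = (k, k)")
      case True
      then have w: "set w \<subseteq> J" "length w \<ge> 1"
        using smf_word_subset by (auto simp: Suc_le_eq)
      have "cmod (resolvent_vec J \<alpha> k z w)
          = cmod z ^ (length w - 1) * cmod (\<Prod>p\<leftarrow>butlast w. complex_of_real (\<alpha> p))"
        using True by (simp add: resolvent_vec_def norm_mult norm_power)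
      also have "\<dots> \<le> cmod z ^ (length w - 1) * M ^ (length w - 1)"
      proof (rule mult_left_mono)
        have "\<forall>p\<in>set (butlast w). 0 \<le> \<alpha> p \<and> \<alpha> p \<le> M"
          using assms(2) w(1) by (auto dest: in_set_butlastD)
        then show "cmod (\<Prod>p\<leftarrow>butlast w. complex_of_real (\<alpha> p)) \<le> M ^ (length w - 1)"
          by (metis length_butlast norm_prod_list_of_real_le)
      qed simp
      also have "\<dots> \<le> r ^ (length w - 1)"
      proof -
        have "0 \<le> M"
          using assms(2) w hd_in_set[of w] by fastforce
        then show ?thesis
          using zM by (simp add: power_mult_distrib[symmetric] power_mono)
      qed
      finally have bound: "cmod (resolvent_vec J \<alpha> k z w) \<le> r ^ (length w - 1)" .
      then have "(cmod (resolvent_vec J \<alpha> k z w))\<^sup>2 \<le> r ^ (length w - 1)"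
        using r by (smt (verit) mult_left_le_one_le norm_ge_zero power2_eq_square power_le_one)
      also have "\<dots> = (1 / r) * r ^ length w"
        using w(2) r(1) by (cases w) auto
      finally show ?thesis
        using w(1) by simp
    next
      case False
      then have "resolvent_vec J \<alpha> k z w = 0"
        unfolding resolvent_vec_def by (rule if_not_P)
      with r(1) show ?thesis by simp
    qed
  qed simp
  show "\<forall>w. \<not> adm J w \<longrightarrow> resolvent_vec J \<alpha> k z w = 0"
    by (simp add: resolvent_vec_def adm_iff_smf_word)
qed

lemma resolvent_equation_iff:
  assumes "finite J" "(k, k) \<in> J" "in_N J (resolvent_vec J \<alpha> k z)"
  shows "in_N J v \<and> (\<lambda>w. v w - z * Lop J \<alpha> v w) = basis_vec [(k, k)] \<longleftrightarrow> v = resolvent_vec J \<alpha> k z"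
  using assms resolvent_vec_solves resolvent_equation_unique by metis

lemma lstar_funpow: "((lstar \<alpha> p) ^^ n) v w = complex_of_real (\<alpha> p) ^ n * v (replicate n p @ w)"
proof (induction n arbitrary: w)
  case (Suc n)
  then show ?case
    by (simp add: lstar_def replicate_app_Cons_same)
qed simp

lemma poly_eq_coeff_0_plus:
  fixes f :: "'a::comm_semiring_1 poly"
  shows "poly f x = coeff f 0 + (\<Sum>n = 1..degree f. coeff f n * x ^ n)"
proof -
  have range: "{..degree f} = insert 0 {1..degree f}" by auto
  show ?thesis
    unfolding poly_altdef range by simp
qed

lemma fl_eq_poly:
  assumes "\<And>n. n \<ge> 1 \<Longrightarrow> ((lstar \<alpha> p) ^^ n) v w = x ^ n * proj J p v w + x ^ (n - 1) * c"
  shows "fl J \<alpha> f p v w = poly f x * proj J p v w + c * Df f x"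
proof -
  have "fl J \<alpha> f p v w =
      coeff f 0 * proj J p v w + (\<Sum>n = 1..degree f. coeff f n * (x ^ n * proj J p v w + x ^ (n - 1) * c))"
    unfolding fl_def using assms by simp
  also have "\<dots> = poly f x * proj J p v w + c * Df f x"
    by (simp add: poly_eq_coeff_0_plus Df_def algebra_simps sum.distrib sum_distrib_left sum_distrib_right)
  finally show ?thesis .
qed

lemma lstar_funpow_resolvent_vec:
  assumes "n \<ge> 1" "w \<noteq> []"
  shows "((lstar \<alpha> p) ^^ n) (resolvent_vec J \<alpha> k z) w =
    (if smf_word J (replicate n p @ w)
     then (complex_of_real ((\<alpha> p)\<^sup>2) * z) ^ n * resolvent_vec J \<alpha> k z w else 0)"
proof (cases "smf_word J (replicate n p @ w)")
  case True
  then have "smf_word J w"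
    using smf_word_replicate_append[OF assms(1)] assms(2) by simp
  moreover obtain m where "length w = Suc m"
    using assms(2) by (cases w) auto
  ultimately show ?thesis
    using True assms(2)
    by (simp add: lstar_funpow resolvent_vec_def butlast_append power_add power_mult_distrib
        power2_eq_square mult_ac)
next
  case False
  with assms(2) show ?thesis
    by (simp add: lstar_funpow resolvent_vec_def)
qed

lemma lstar_funpow_resolvent_vec_diag:
  fixes \<alpha> :: "nat \<times> nat \<Rightarrow> real" and z :: complex
  assumes "(j, j) \<in> J" "n \<ge> 1"
  defines "x \<equiv> complex_of_real ((\<alpha> (j, j))\<^sup>2) * z"
  shows "((lstar \<alpha> (j, j)) ^^ n) (resolvent_vec J \<alpha> j z) w =
    x ^ n * proj J (j, j) (resolvent_vec J \<alpha> j z) w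
    + x ^ (n - 1) * (complex_of_real (\<alpha> (j, j)) * basis_vec [] w)"
proof (cases "w = []")
  case True
  obtain m where n: "n = Suc m"
    using assms(2) by (cases n) auto
  have "smf_word J (replicate n (j, j))"
    using smf_word_replicate_append[OF assms(2), of J "(j, j)" "[]"] assms(1) by simp
  moreover have "butlast (replicate n (j, j)) = replicate m (j, j)"
    unfolding n by (induction m) auto
  ultimately have "resolvent_vec J \<alpha> j z (replicate n (j, j)) = z ^ m * complex_of_real (\<alpha> (j, j)) ^ m"
    using n by (simp add: resolvent_vec_def del: replicate_Suc)
  then have "((lstar \<alpha> (j, j)) ^^ n) (resolvent_vec J \<alpha> j z) [] = x ^ (n - 1) * complex_of_real (\<alpha> (j, j))"
    unfolding lstar_funpow append_Nil2
    using n by (simp add: x_def power_mult_distrib power2_eq_square mult_ac del: replicate_Suc)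
  with True show ?thesis
    by (simp add: proj_def basis_vec_def resolvent_vec_def)
next
  case False
  then have "smf_word J (replicate n (j, j) @ w) \<longleftrightarrow> smf_word J w \<and> hd w = (j, j)"
    using smf_word_replicate_append[OF assms(2)] assms(1) by auto
  with False show ?thesis
    by (simp add: lstar_funpow_resolvent_vec[OF assms(2)] proj_def adm_iff_smf_word basis_vec_def x_def)
qed

lemma lstar_funpow_resolvent_vec_offdiag:
  assumes "J \<subseteq> {1, 2} \<times> {1, 2}" "(i, j) \<in> J" "i \<noteq> j" "n \<ge> 1"
  shows "((lstar \<alpha> (i, j)) ^^ n) (resolvent_vec J \<alpha> k z) w =
    (complex_of_real ((\<alpha> (i, j))\<^sup>2) * z) ^ n * proj J (i, j) (resolvent_vec J \<alpha> k z) w"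
proof (cases "w = []")
  case True
  have "\<not> smf_word J (replicate n (i, j))"
    using smf_word_replicate_append[OF assms(4), of J "(i, j)" "[]"] assms(3) by simp
  with True assms(3) show ?thesis
    by (simp add: lstar_funpow resolvent_vec_def proj_def)
next
  case False
  text \<open>With only the indices \<open>1, 2\<close>, a letter not starting at \<open>j\<close> starts at \<open>i\<close>.\<close>
  have "hd w = (i, j) \<or> fst (hd w) = j \<longleftrightarrow> hd w \<noteq> (i, i)" if "smf_word J w"
  proof -
    have "hd w \<in> {1, 2} \<times> {1, 2}" "(i, j) \<in> {1, 2} \<times> {1, 2}"
      using smf_word_subset[OF that] False assms(1,2) hd_in_set by blast+
    with assms(3) show ?thesis
      by (cases "hd w") auto
  qed
  then have "smf_word J (replicate n (i, j) @ w) \<longleftrightarrow> smf_word J w \<and> hd w \<noteq> (i, i)"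
    using smf_word_replicate_append[OF assms(4)] assms(2,3) False by auto
  with False assms(3) show ?thesis
    by (simp add: lstar_funpow_resolvent_vec[OF assms(4)] proj_def adm_iff_smf_word)
qed

lemma fl_resolvent_vec_diag:
  assumes "(j, j) \<in> J"
  shows "fl J \<alpha> f (j, j) (resolvent_vec J \<alpha> j z) =
    (\<lambda>w. poly f (complex_of_real ((\<alpha> (j, j))\<^sup>2) * z) * proj J (j, j) (resolvent_vec J \<alpha> j z) w
         + complex_of_real (\<alpha> (j, j)) * Df f (complex_of_real ((\<alpha> (j, j))\<^sup>2) * z) * basis_vec [] w)"
proof
  fix w
  have "fl J \<alpha> f (j, j) (resolvent_vec J \<alpha> j z) w =
    poly f (complex_of_real ((\<alpha> (j, j))\<^sup>2) * z) * proj J (j, j) (resolvent_vec J \<alpha> j z) w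
    + complex_of_real (\<alpha> (j, j)) * basis_vec [] w * Df f (complex_of_real ((\<alpha> (j, j))\<^sup>2) * z)"
    by (rule fl_eq_poly) (rule lstar_funpow_resolvent_vec_diag[OF assms])
  then show "fl J \<alpha> f (j, j) (resolvent_vec J \<alpha> j z) w =
    poly f (complex_of_real ((\<alpha> (j, j))\<^sup>2) * z) * proj J (j, j) (resolvent_vec J \<alpha> j z) w
    + complex_of_real (\<alpha> (j, j)) * Df f (complex_of_real ((\<alpha> (j, j))\<^sup>2) * z) * basis_vec [] w"
    by (simp add: mult_ac)
qed

lemma fl_resolvent_vec_offdiag:
  assumes "J \<subseteq> {1, 2} \<times> {1, 2}" "(i, j) \<in> J" "i \<noteq> j"
  shows "fl J \<alpha> f (i, j) (resolvent_vec J \<alpha> k z) =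
    (\<lambda>w. poly f (complex_of_real ((\<alpha> (i, j))\<^sup>2) * z) * proj J (i, j) (resolvent_vec J \<alpha> k z) w)"
proof
  fix w
  have "fl J \<alpha> f (i, j) (resolvent_vec J \<alpha> k z) w =
    poly f (complex_of_real ((\<alpha> (i, j))\<^sup>2) * z) * proj J (i, j) (resolvent_vec J \<alpha> k z) w
    + 0 * Df f (complex_of_real ((\<alpha> (i, j))\<^sup>2) * z)"
    by (rule fl_eq_poly) (simp add: lstar_funpow_resolvent_vec_offdiag[OF assms])
  then show "fl J \<alpha> f (i, j) (resolvent_vec J \<alpha> k z) w =
    poly f (complex_of_real ((\<alpha> (i, j))\<^sup>2) * z) * proj J (i, j) (resolvent_vec J \<alpha> k z) w"
    by simp
qed

theorem proposition6p1:
  fixes J :: "(nat \<times> nat) set" and \<alpha> :: "nat \<times> nat \<Rightarrow> real" and f :: "complex poly"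
  assumes "J \<subseteq> {1, 2} \<times> {1, 2}"
    and "\<forall>p\<in>J. \<alpha> p > 0"
  shows "\<exists>r > 0. \<forall>z. cmod z < r \<longrightarrow>
     (\<forall>k. (k, k) \<in> J \<longrightarrow>
        (\<exists>!v. in_N J v \<and> (\<lambda>w. v w - z * Lop J \<alpha> v w) = basis_vec [(k, k)])) \<and>
     (\<forall>j. (j, j) \<in> J \<longrightarrow>
        fl J \<alpha> f (j, j) (omega J \<alpha> j z) =
        (\<lambda>w. poly f (complex_of_real ((\<alpha> (j, j))\<^sup>2) * z) * proj J (j, j) (omega J \<alpha> j z) w
             + complex_of_real (\<alpha> (j, j)) * Df f (complex_of_real ((\<alpha> (j, j))\<^sup>2) * z)
               * basis_vec [] w)) \<and>
     (\<forall>i j k. (i, j) \<in> J \<and> i \<noteq> j \<and> (k, k) \<in> J \<longrightarrow>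
        fl J \<alpha> f (i, j) (omega J \<alpha> k z) =
        (\<lambda>w. poly f (complex_of_real ((\<alpha> (i, j))\<^sup>2) * z) * proj J (i, j) (omega J \<alpha> k z) w))"
proof -
  have J: "finite J"
    using assms(1) finite_subset by blast
  define M where "M = 1 + (\<Sum>p\<in>J. \<alpha> p)"
  have \<alpha>M: "\<forall>p\<in>J. 0 \<le> \<alpha> p \<and> \<alpha> p \<le> M"
  proof
    fix p
    assume "p \<in> J"
    moreover have "\<alpha> p \<le> (\<Sum>p\<in>J. \<alpha> p)"
      using calculation J assms(2) by (intro member_le_sum) (auto intro: less_imp_le)
    ultimately show "0 \<le> \<alpha> p \<and> \<alpha> p \<le> M"
      using assms(2) by (auto simp: M_def intro: less_imp_le)
  qed
  have "0 < M * (1 + card J)"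
    using assms(2) by (simp add: M_def sum_nonneg less_imp_le add_pos_nonneg)
  define r where "r = 1 / (M * (1 + card J))"
  have "r > 0"
    using \<open>0 < M * (1 + card J)\<close> by (simp add: r_def)
  moreover have "in_N J (resolvent_vec J \<alpha> k z)" if "cmod z < r" for z k
  proof (rule resolvent_vec_in_N[OF J \<alpha>M])
    show "cmod z * M * (1 + card J) \<le> 1"
      using that \<open>0 < M * (1 + card J)\<close> by (simp add: r_def pos_less_divide_eq mult.assoc)
  qed
  ultimately show ?thesis
    using resolvent_equation_iff[OF J] J
    by (intro exI[where x = r]) (auto simp: omega_def resolv_def
        fl_resolvent_vec_diag fl_resolvent_vec_offdiag[OF assms(1)])
qed

end
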